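(* Let $P$ be a finite poset and $q$ a prime power. Suppose that $La(n,P)=(1+o(1))\Sigma(n,e(P))$ as $n\to\infty$, and that $e_q(P)=e(P)$. Then $La_q(n,P)=(1+o(1))\Sigma_q(n,e_q(P))$ as $n\to\infty$.
   Context: A family $\mathcal{F}$ of subsets of $[n]$ (resp. of subspaces of $\mathbb{F}_q^n$) weakly contains a poset $P$ if there is an injection $f:P\to\mathcal{F}$ such that $x<_P y$ implies $f(x)\subsetneq f(y)$; otherwise $\mathcal{F}$ is $P$-free. $La(n,P)$ is the maximum size of a $P$-free family $\mathcal{F}\subseteq 2^{[n]}$, and $La_q(n,P)$ the maximum size of a $P$-free family of subspaces of $\mathbb{F}_q^n$. Level $i$ of $2^{[n]}$ is the family of $i$-element subsets; level $i$ of the subspace poset is the set of $i$-dimensional subspaces. $e(P)$ is the largest integer $m$ such that for every $n$, every family in $2^{[n]}$ consisting of $m$ consecutive levels is $P$-free; $e_q(P)$ is the largest integer $m$ such that the middle $m$ levels of the subspace poset of $\mathbb{F}_q^n$ do not contain $P$ for any $n$. $\Sigma(n,k)=\sum_{i=1}^k\binom{n}{\lfloor\frac{n-k}{2}\rfloor+i}$ and $\Sigma_q(n,k)=\sum_{i=1}^k{n \brack \lfloor\frac{n-k}{2}\rfloor+i}_q$, with ${n\brack j}_q$ the Gaussian binomial coefficient (number of $j$-dimensional subspaces of $\mathbb{F}_q^n$). *)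

theory Defs
  imports Main "HOL-Library.Landau_Symbols" "HOL-Library.Function_Algebras"
begin

text \<open>A finite poset is given as a finite carrier set P of an ordered type 'p
  (every finite poset is isomorphic to such a set).\<close>

definition weakly_contains :: "'p::order set \<Rightarrow> 'b set set \<Rightarrow> bool" where
  "weakly_contains P F \<longleftrightarrow>
     (\<exists>f. inj_on f P \<and> f ` P \<subseteq> F \<and> (\<forall>x\<in>P. \<forall>y\<in>P. x < y \<longrightarrow> f x \<subset> f y))"

definition P_free :: "'p::order set \<Rightarrow> 'b set set \<Rightarrow> bool" where
  "P_free P F \<longleftrightarrow> \<not> weakly_contains P F"

definition La :: "'p::order set \<Rightarrow> nat \<Rightarrow> nat" where
  "La P n = Max {card F | F. F \<subseteq> Pow {..<n} \<and> P_free P F}"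

definition bool_levels :: "nat \<Rightarrow> nat \<Rightarrow> nat \<Rightarrow> nat set set" where
  "bool_levels n i m = {A. A \<subseteq> {..<n} \<and> i \<le> card A \<and> card A < i + m}"

definition eP :: "'p::order set \<Rightarrow> nat" where
  "eP P = (GREATEST m. \<forall>n i. i + m \<le> n + 1 \<longrightarrow> P_free P (bool_levels n i m))"

definition Sigma_b :: "nat \<Rightarrow> nat \<Rightarrow> real" where
  "Sigma_b n k = (\<Sum>i=1..k. let j = (int n - int k) div 2 + int i in
                   if 0 \<le> j then real (n choose nat j) else 0)"

text \<open>F^n is represented as the functions nat => F vanishing outside {..<n}.\<close>

definition fscale :: "'f::field \<Rightarrow> (nat \<Rightarrow> 'f) \<Rightarrow> (nat \<Rightarrow> 'f)" where
  "fscale c v = (\<lambda>i. c * v i)"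

definition Fn :: "nat \<Rightarrow> (nat \<Rightarrow> 'f::field) set" where
  "Fn n = {v. \<forall>i\<ge>n. v i = 0}"

definition subspaces :: "nat \<Rightarrow> (nat \<Rightarrow> 'f::field) set set" where
  "subspaces n = {V. V \<subseteq> Fn n \<and> module.subspace fscale V}"

definition sdim :: "(nat \<Rightarrow> 'f::field) set \<Rightarrow> nat" where
  "sdim V = vector_space.dim fscale V"

definition La_q :: "'p::order set \<Rightarrow> nat \<Rightarrow> 'f::{field,finite} itself \<Rightarrow> nat" where
  "La_q P n _ = Max {card F | F. F \<subseteq> (subspaces n :: (nat \<Rightarrow> 'f) set set) \<and> P_free P F}"

definition mid_levels :: "nat \<Rightarrow> nat \<Rightarrow> (nat \<Rightarrow> 'f::field) set set" where
  "mid_levels n m = {V \<in> subspaces n. (int n - int m) div 2 < int (sdim V) \<and>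
                                       int (sdim V) \<le> (int n - int m) div 2 + int m}"

definition eqP :: "'p::order set \<Rightarrow> 'f::{field,finite} itself \<Rightarrow> nat" where
  "eqP P _ = (GREATEST m. \<forall>n. P_free P (mid_levels n m :: (nat \<Rightarrow> 'f) set set))"

definition gauss_binom :: "real \<Rightarrow> nat \<Rightarrow> nat \<Rightarrow> real" where
  "gauss_binom q n j = (if j \<le> n then (\<Prod>i<j. (q ^ (n - i) - 1) / (q ^ (i + 1) - 1)) else 0)"

definition Sigma_q :: "real \<Rightarrow> nat \<Rightarrow> nat \<Rightarrow> real" where
  "Sigma_q q n k = (\<Sum>i=1..k. let j = (int n - int k) div 2 + int i in
                   if 0 \<le> j then gauss_binom q n (nat j) else 0)"

end

(*
  Fix an ordered basis b of F_q^n. The map S |-> span {b i | i in S} embeds the Boolean lattice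
  of subsets of [n] into the subspace lattice and preserves strict inclusion, so it pulls a
  P-free family F of subspaces back to a P-free family of sets, which has at most La(n,P)
  members. Averaged over all ordered bases, the number of sets S sent to a fixed k-dimensional
  subspace is binom(n,k) / [n k]_q, which gives the q-analogue of the LYM inequality

      sum_{V in F} w(dim V) <= La(n,P),    w(k) = binom(n,k) / [n k]_q.

  The weight w is symmetric and decreases towards the middle level, so with e = e_q(P) = e(P)
  and W = w(floor((n-e)/2)) it is at most W on the middle e levels M and at least W elsewhere.
  Trading members of F outside M against members of M therefore gives
  |F| <= |M| + (La(n,P) - Sigma(n,e)) / W, while Sigma(n,e) <= W |M| = W Sigma_q(n,e).
  Hence La_q(n,P) - Sigma_q(n,e) = o(Sigma_q(n,e)); the matching lower bound holds because the
  middle e_q(P) levels are P-free.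
*)

theory Submission
  imports Defs "HOL-Library.FuncSet"
begin

section \<open>Weak containment and counting\<close>

lemma weakly_contains_mono:
  "weakly_contains P F \<Longrightarrow> F \<subseteq> F' \<Longrightarrow> weakly_contains P F'"
  unfolding weakly_contains_def by (meson order_trans)

lemma P_free_empty: "P \<noteq> {} \<Longrightarrow> P_free P {}"
  by (auto simp: P_free_def weakly_contains_def)

lemma weakly_contains_image:
  assumes "weakly_contains P G" "G \<subseteq> D" "inj_on \<phi> D"
    and "\<And>S T. S \<in> D \<Longrightarrow> T \<in> D \<Longrightarrow> S \<subset> T \<Longrightarrow> \<phi> S \<subset> \<phi> T"
  shows "weakly_contains P (\<phi> ` G)"
proof -
  obtain f where f: "inj_on f P" "f ` P \<subseteq> G" "\<forall>x\<in>P. \<forall>y\<in>P. x < y \<longrightarrow> f x \<subset> f y"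
    using assms(1) by (auto simp: weakly_contains_def)
  have "inj_on (\<phi> \<circ> f) P"
    using f(1,2) assms(2,3) by (intro comp_inj_on) (auto intro: inj_on_subset)
  moreover have "\<forall>x\<in>P. \<forall>y\<in>P. x < y \<longrightarrow> (\<phi> \<circ> f) x \<subset> (\<phi> \<circ> f) y"
  proof (intro ballI impI)
    fix x y assume "x \<in> P" "y \<in> P" "x < y"
    then have "f x \<in> D" "f y \<in> D" "f x \<subset> f y" using f(2,3) assms(2) by auto
    then show "(\<phi> \<circ> f) x \<subset> (\<phi> \<circ> f) y" by (simp add: assms(4))
  qed
  ultimately show ?thesis
    unfolding weakly_contains_def using f(2) by (intro exI[of _ "\<phi> \<circ> f"]) auto
qed

lemma P_free_preimage:
  assumes "P_free P F" "inj_on \<phi> D"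
    and "\<And>S T. S \<in> D \<Longrightarrow> T \<in> D \<Longrightarrow> S \<subset> T \<Longrightarrow> \<phi> S \<subset> \<phi> T"
  shows "P_free P {S \<in> D. \<phi> S \<in> F}"
  unfolding P_free_def
proof
  assume "weakly_contains P {S \<in> D. \<phi> S \<in> F}"
  then have "weakly_contains P (\<phi> ` {S \<in> D. \<phi> S \<in> F})"
    by (rule weakly_contains_image[OF _ _ assms(2,3)]) auto
  then have "weakly_contains P F" by (rule weakly_contains_mono) auto
  then show False using assms(1) by (simp add: P_free_def)
qed

lemma weakly_contains_nonempty_subsets:
  fixes P :: "'p::order set"
  assumes "finite P" "card P \<le> m"
  shows "weakly_contains P {S. S \<subseteq> {..<m} \<and> S \<noteq> {}}"
proof -
  obtain h where h: "bij_betw h P {0..<card P}"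
    using ex_bij_betw_finite_nat[OF assms(1)] by blast
  define f where "f x = h ` {y \<in> P. y \<le> x}" for x
  have h_range: "h ` P \<subseteq> {..<m}" using h assms(2) by (auto simp: bij_betw_def)
  have h_inj: "inj_on h P" using h by (simp add: bij_betw_def)
  have f_inj: "inj_on f P"
  proof
    fix x y assume "x \<in> P" "y \<in> P" "f x = f y"
    then have "{z \<in> P. z \<le> x} = {z \<in> P. z \<le> y}"
      using inj_on_image_eq_iff[OF h_inj] by (simp add: f_def)
    then have "x \<le> y" "y \<le> x" using \<open>x \<in> P\<close> \<open>y \<in> P\<close> by blast+
    then show "x = y" by (rule order.antisym)
  qed
  have f_range: "f ` P \<subseteq> {S. S \<subseteq> {..<m} \<and> S \<noteq> {}}"
    using h_range by (auto simp: f_def)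
  have f_mono: "f x \<subset> f y" if "x \<in> P" "y \<in> P" "x < y" for x y
  proof -
    have "{z \<in> P. z \<le> x} \<subset> {z \<in> P. z \<le> y}"
      using that by (auto simp: less_le_not_le intro: order.trans)
    then show ?thesis
      unfolding f_def using inj_on_subset[OF h_inj, of "{z \<in> P. z \<le> y}"]
      by (simp add: image_strict_mono)
  qed
  show ?thesis
    unfolding weakly_contains_def by (intro exI[of _ f] conjI ballI impI f_inj f_range f_mono)
qed

lemma card_le_La:
  assumes "F \<subseteq> Pow {..<n}" "P_free P F"
  shows "card F \<le> La P n"
proof -
  have "finite {card F | F. F \<subseteq> Pow {..<n} \<and> P_free P F}"
    by (rule finite_subset[of _ "card ` Pow (Pow {..<n})"]) auto
  then show ?thesis unfolding La_def using assms by (intro Max_ge) auto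
qed

lemma card_le_card_plus_weight_excess:
  fixes w :: "'a \<Rightarrow> real"
  assumes "finite F" "finite M" "0 < W"
    and "\<And>x. x \<in> F - M \<Longrightarrow> W \<le> w x" "\<And>x. x \<in> M - F \<Longrightarrow> w x \<le> W"
  shows "real (card F) \<le> real (card M) + (sum w F - sum w M) / W"
proof -
  have "real (card (F - M)) * W \<le> sum w (F - M)"
    using assms(4) by (rule sum_bounded_below)
  moreover have "sum w (M - F) \<le> real (card (M - F)) * W"
    using assms(5) by (rule sum_bounded_above)
  moreover have "card F = card (F \<inter> M) + card (F - M)" "card M = card (F \<inter> M) + card (M - F)"
    using card_Int_Diff[OF assms(1), of M] card_Int_Diff[OF assms(2), of F] by (simp_all add: Int_commute)
  moreover have "sum w F = sum w (F \<inter> M) + sum w (F - M)" "sum w M = sum w (F \<inter> M) + sum w (M - F)"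
    using sum.Int_Diff[OF assms(1), of w M] sum.Int_Diff[OF assms(2), of w F] by (simp_all add: Int_commute)
  ultimately have "real (card F) * W \<le> real (card M) * W + (sum w F - sum w M)"
    by (simp add: algebra_simps)
  then show ?thesis using assms(3) by (simp add: field_simps)
qed

lemma sum_of_bool_eq_card_filter:
  "finite A \<Longrightarrow> (\<Sum>x\<in>A. of_bool (R x)) = real (card {x \<in> A. R x})"
  by (simp add: Int_def)

lemma prod_lessThan_add: "(\<Prod>j<a + b. f j) = (\<Prod>j<a. f j) * (\<Prod>j<b. f (a + j))"
  for f :: "nat \<Rightarrow> 'a::comm_monoid_mult"
  by (induction b) (simp_all add: mult.assoc)

lemma of_nat_prod_power_diff:
  assumes "0 < q" "\<And>j. j \<in> A \<Longrightarrow> b j \<le> a j"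
  shows "real (\<Prod>j\<in>A. q ^ a j - q ^ b j) = (\<Prod>j\<in>A. real q ^ a j - real q ^ b j)"
  unfolding of_nat_prod using assms by (intro prod.cong) (simp_all add: power_increasing)

section \<open>Gaussian binomial coefficients\<close>

lemma one_less_mult_power: "1 < (q :: real) \<Longrightarrow> 1 < q * q ^ k"
  using one_less_power[of q "Suc k"] by simp

lemma gauss_binom_pos: "1 < q \<Longrightarrow> k \<le> n \<Longrightarrow> 0 < gauss_binom q n k"
  unfolding gauss_binom_def by (auto intro!: prod_pos divide_pos_pos simp: one_less_mult_power)

lemma gauss_binom_Suc:
  assumes "1 < q" "Suc k \<le> n"
  shows "gauss_binom q n (Suc k) * (q ^ Suc k - 1) = gauss_binom q n k * (q ^ (n - k) - 1)"
proof -
  have "q ^ Suc k - 1 \<noteq> 0" using one_less_power[OF assms(1), of "Suc k"] by simp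
  then show ?thesis using assms(2) by (simp add: gauss_binom_def)
qed

(* (q - 1)^m times the q-factorial [m]_q! *)
definition qfact :: "real \<Rightarrow> nat \<Rightarrow> real" where
  "qfact q m = (\<Prod>i<m. q ^ Suc i - 1)"

lemma qfact_Suc: "qfact q (Suc m) = (q ^ Suc m - 1) * qfact q m"
  unfolding qfact_def by (simp only: prod.lessThan_Suc mult.commute)

lemma qfact_pos: "1 < q \<Longrightarrow> 0 < qfact q m"
  unfolding qfact_def by (auto intro!: prod_pos simp: one_less_mult_power)

lemma gauss_binom_qfact:
  assumes "1 < q" "k \<le> n"
  shows "gauss_binom q n k * qfact q k * qfact q (n - k) = qfact q n"
  using assms(2)
proof (induction k)
  case 0
  then show ?case by (simp add: gauss_binom_def qfact_def)
next
  case (Suc k)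
  have "n - k = Suc (n - Suc k)" using Suc.prems by simp
  then have "gauss_binom q n (Suc k) * qfact q (Suc k) * qfact q (n - Suc k)
      = (gauss_binom q n (Suc k) * (q ^ Suc k - 1)) * qfact q k * qfact q (n - Suc k)"
    by (simp only: qfact_Suc ac_simps)
  also have "\<dots> = gauss_binom q n k * qfact q k * ((q ^ (n - k) - 1) * qfact q (n - Suc k))"
    by (simp only: gauss_binom_Suc[OF assms(1) Suc.prems] ac_simps)
  also have "(q ^ (n - k) - 1) * qfact q (n - Suc k) = qfact q (n - k)"
    using \<open>n - k = Suc (n - Suc k)\<close> by (simp only: qfact_Suc)
  finally show ?case using Suc by simp
qed

lemma gauss_binom_symmetric:
  assumes "1 < q" "k \<le> n"
  shows "gauss_binom q n (n - k) = gauss_binom q n k"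
proof -
  have "gauss_binom q n (n - k) * (qfact q k * qfact q (n - k))
      = gauss_binom q n k * (qfact q k * qfact q (n - k))"
    using gauss_binom_qfact[OF assms] gauss_binom_qfact[OF assms(1), of "n - k" n] assms(2)
    by (simp add: algebra_simps)
  then show ?thesis using qfact_pos[OF assms(1), of k] qfact_pos[OF assms(1), of "n - k"] by simp
qed

lemma gauss_binom_mult_prod:
  assumes "1 < q" "k \<le> n"
  shows "gauss_binom q n k * (\<Prod>j<k. q ^ k - q ^ j) = (\<Prod>j<k. q ^ n - q ^ j)"
  using assms(2)
proof (induction k)
  case 0
  then show ?case by (simp add: gauss_binom_def)
next
  case (Suc k)
  have "(\<Prod>j<k. q ^ Suc k - q ^ Suc j) = (\<Prod>j<k. q * (q ^ k - q ^ j))"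
    by (simp add: right_diff_distrib)
  also have "\<dots> = q ^ k * (\<Prod>j<k. q ^ k - q ^ j)"
    by (subst prod.distrib) simp
  finally have shift: "(\<Prod>j<Suc k. q ^ Suc k - q ^ j) = (q ^ Suc k - 1) * (q ^ k * (\<Prod>j<k. q ^ k - q ^ j))"
    by (simp only: prod.lessThan_Suc_shift power_0)
  have split: "q ^ k * (q ^ (n - k) - 1) = q ^ n - q ^ k"
    using Suc.prems by (simp add: right_diff_distrib power_add[symmetric])
  have "gauss_binom q n (Suc k) * (\<Prod>j<Suc k. q ^ Suc k - q ^ j)
      = (gauss_binom q n (Suc k) * (q ^ Suc k - 1)) * (q ^ k * (\<Prod>j<k. q ^ k - q ^ j))"
    by (simp only: shift mult.assoc)
  also have "\<dots> = (gauss_binom q n k * (\<Prod>j<k. q ^ k - q ^ j)) * (q ^ k * (q ^ (n - k) - 1))"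
    by (simp only: gauss_binom_Suc[OF assms(1) Suc.prems] ac_simps)
  also have "\<dots> = (\<Prod>j<Suc k. q ^ n - q ^ j)"
    using Suc by (simp add: split)
  finally show ?case .
qed

lemma power_minus_one_ratio_mono:
  fixes q :: real
  assumes "1 \<le> q" "a \<le> b"
  shows "real b * (q ^ a - 1) \<le> real a * (q ^ b - 1)"
  using assms(2)
proof (induction b)
  case 0
  then show ?case by simp
next
  case (Suc b)
  show ?case
  proof (cases "a = Suc b")
    case False
    then have "real b * (q ^ a - 1) \<le> real a * (q ^ b - 1)" using Suc by simp
    moreover have "q ^ a - 1 \<le> real a * q ^ b * (q - 1)"
    proof -
      have "q ^ a - 1 = (q - 1) * (\<Sum>i<a. q ^ i)" by (simp add: power_diff_1_eq)
      also have "\<dots> \<le> (q - 1) * (\<Sum>i<a. q ^ b)"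
        using assms False Suc.prems by (intro mult_left_mono sum_mono power_increasing) auto
      finally show ?thesis by (simp add: algebra_simps)
    qed
    ultimately show ?thesis by (simp add: algebra_simps)
  qed simp
qed

definition lym_weight :: "real \<Rightarrow> nat \<Rightarrow> nat \<Rightarrow> real" where
  "lym_weight q n k = real (n choose k) / gauss_binom q n k"

lemma lym_weight_pos: "1 < q \<Longrightarrow> k \<le> n \<Longrightarrow> 0 < lym_weight q n k"
  unfolding lym_weight_def using gauss_binom_pos by simp

lemma gauss_binom_mult_lym_weight:
  "1 < q \<Longrightarrow> k \<le> n \<Longrightarrow> gauss_binom q n k * lym_weight q n k = real (n choose k)"
  unfolding lym_weight_def using gauss_binom_pos[of q k n] by simp

lemma lym_weight_symmetric:
  "1 < q \<Longrightarrow> k \<le> n \<Longrightarrow> lym_weight q n (n - k) = lym_weight q n k"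
  unfolding lym_weight_def using gauss_binom_symmetric binomial_symmetric by metis

lemma lym_weight_Suc_le:
  assumes "1 < q" "2 * k + 1 \<le> n"
  shows "lym_weight q n (Suc k) \<le> lym_weight q n k"
proof -
  let ?b = "\<lambda>k. real (n choose k)" and ?g = "gauss_binom q n"
  have binom: "?b (Suc k) * real (Suc k) = ?b k * real (n - k)"
    using binomial_absorption[of k n] binomial_absorb_comp[of n k] by (metis mult.commute of_nat_mult)
  have gauss: "?g (Suc k) * (q ^ Suc k - 1) = ?g k * (q ^ (n - k) - 1)"
    using gauss_binom_Suc[OF assms(1)] assms(2) by simp
  have ratio: "real (n - k) * (q ^ Suc k - 1) \<le> real (Suc k) * (q ^ (n - k) - 1)"
    using power_minus_one_ratio_mono[of q "Suc k" "n - k"] assms by simp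
  have g_pos: "0 < ?g k" "0 < ?g (Suc k)" using gauss_binom_pos[OF assms(1)] assms(2) by auto
  have "?b (Suc k) * ?g k * (real (Suc k) * (q ^ Suc k - 1))
      = (?b (Suc k) * real (Suc k)) * (?g k * (q ^ Suc k - 1))"
    by (simp only: ac_simps)
  also have "\<dots> = (?b k * real (n - k)) * (?g k * (q ^ Suc k - 1))"
    by (simp only: binom)
  also have "\<dots> = ?b k * ?g k * (real (n - k) * (q ^ Suc k - 1))"
    by (simp only: ac_simps)
  also have "\<dots> \<le> ?b k * ?g k * (real (Suc k) * (q ^ (n - k) - 1))"
    using ratio g_pos by (intro mult_left_mono) auto
  also have "\<dots> = ?b k * real (Suc k) * (?g k * (q ^ (n - k) - 1))"
    by (simp only: ac_simps)
  also have "\<dots> = ?b k * ?g (Suc k) * (real (Suc k) * (q ^ Suc k - 1))"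
    by (simp only: gauss[symmetric] ac_simps)
  finally have "?b (Suc k) * ?g k \<le> ?b k * ?g (Suc k)"
    using one_less_power[OF assms(1), of "Suc k"] by (simp add: mult_le_cancel_right)
  then show ?thesis
    unfolding lym_weight_def using g_pos by (simp add: divide_simps mult.commute)
qed

lemma lym_weight_antimono:
  assumes "1 < q" "i \<le> j" "j \<le> n div 2"
  shows "lym_weight q n j \<le> lym_weight q n i"
  using assms(2,3)
proof (induction j)
  case (Suc j)
  show ?case
  proof (cases "i = Suc j")
    case False
    then have "lym_weight q n j \<le> lym_weight q n i" using Suc by simp
    moreover have "lym_weight q n (Suc j) \<le> lym_weight q n j"
      using lym_weight_Suc_le[OF assms(1), of j n] Suc.prems by simp
    ultimately show ?thesis by simp
  qed simp
qed simp

lemma lym_weight_le_in_window: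
  assumes "1 < q" "e \<le> n" "(n - e) div 2 < k" "k \<le> (n - e) div 2 + e"
  shows "lym_weight q n k \<le> lym_weight q n ((n - e) div 2)"
proof (cases "k \<le> n div 2")
  case True
  then show ?thesis using lym_weight_antimono[OF assms(1)] assms(3) by simp
next
  case False
  have "lym_weight q n (n - k) \<le> lym_weight q n ((n - e) div 2)"
    using lym_weight_antimono[OF assms(1), of "(n - e) div 2" "n - k" n] False assms(2,4) by simp
  then show ?thesis using lym_weight_symmetric[OF assms(1), of k n] assms(2,4) by simp
qed

lemma lym_weight_ge_out_window:
  assumes "1 < q" "e \<le> n" "k \<le> n" "\<not> ((n - e) div 2 < k \<and> k \<le> (n - e) div 2 + e)"
  shows "lym_weight q n ((n - e) div 2) \<le> lym_weight q n k"
proof (cases "k \<le> (n - e) div 2")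
  case True
  then show ?thesis using lym_weight_antimono[OF assms(1), of k "(n - e) div 2" n] by simp
next
  case False
  have "lym_weight q n ((n - e) div 2) \<le> lym_weight q n (n - k)"
    using lym_weight_antimono[OF assms(1), of "n - k" "(n - e) div 2" n] False assms(2,4) by simp
  then show ?thesis using lym_weight_symmetric[OF assms(1,3)] by simp
qed

lemma int_diff_div_2: "e \<le> n \<Longrightarrow> (int n - int e) div 2 = int ((n - e) div 2)"
  by (simp add: zdiv_int)

lemma Sigma_q_eq_sum:
  "e \<le> n \<Longrightarrow> Sigma_q q n e = (\<Sum>i=1..e. gauss_binom q n ((n - e) div 2 + i))"
  unfolding Sigma_q_def Let_def by (simp add: int_diff_div_2 nat_add_distrib)

lemma Sigma_b_eq_sum:
  "e \<le> n \<Longrightarrow> Sigma_b n e = (\<Sum>i=1..e. real (n choose ((n - e) div 2 + i)))"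
  unfolding Sigma_b_def Let_def by (simp add: int_diff_div_2 nat_add_distrib)

lemma Sigma_b_le_lym_weight_Sigma_q:
  assumes "1 < q" "e \<le> n"
  shows "Sigma_b n e \<le> lym_weight q n ((n - e) div 2) * Sigma_q q n e"
proof -
  have "real (n choose ((n - e) div 2 + i))
      \<le> lym_weight q n ((n - e) div 2) * gauss_binom q n ((n - e) div 2 + i)"
    if "i \<in> {1..e}" for i
  proof -
    have "(n - e) div 2 + i \<le> n" using that assms(2) by auto
    then have "real (n choose ((n - e) div 2 + i))
        = lym_weight q n ((n - e) div 2 + i) * gauss_binom q n ((n - e) div 2 + i)"
      using gauss_binom_pos[OF assms(1), of "(n - e) div 2 + i" n] by (simp add: lym_weight_def)
    also have "\<dots> \<le> lym_weight q n ((n - e) div 2) * gauss_binom q n ((n - e) div 2 + i)"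
      using that assms \<open>(n - e) div 2 + i \<le> n\<close> gauss_binom_pos[OF assms(1)]
      by (intro mult_right_mono lym_weight_le_in_window) (auto simp: less_imp_le)
    finally show ?thesis .
  qed
  then show ?thesis
    unfolding Sigma_b_eq_sum[OF assms(2)] Sigma_q_eq_sum[OF assms(2)] sum_distrib_left
    by (rule sum_mono)
qed

section \<open>Vector spaces over a finite field\<close>

lemma card_UNIV_field_ge_2:
  assumes "finite (UNIV :: 'a::field set)"
  shows "2 \<le> card (UNIV :: 'a set)"
proof -
  have "card {0 :: 'a, 1} \<le> card (UNIV :: 'a set)" using assms by (intro card_mono) auto
  then show ?thesis by simp
qed

context vector_space
begin

lemma card_span_independent:
  assumes "finite (UNIV :: 'a set)" "finite X" "independent X"
  shows "card (span X) = card (UNIV :: 'a set) ^ card X"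
proof -
  let ?comb = "\<lambda>u. \<Sum>v\<in>X. scale (u v) v"
  have span_eq: "span X = ?comb ` (X \<rightarrow>\<^sub>E UNIV)"
  proof -
    have "?comb u \<in> ?comb ` (X \<rightarrow>\<^sub>E UNIV)" for u
    proof
      show "?comb u = ?comb (restrict u X)" by (intro sum.cong) auto
    qed (simp only: restrict_PiE_iff, simp)
    then show ?thesis
      unfolding span_finite[OF assms(2)] by blast
  qed
  have "inj_on ?comb (X \<rightarrow>\<^sub>E UNIV)"
  proof
    fix u u' assume u: "u \<in> X \<rightarrow>\<^sub>E UNIV" "u' \<in> X \<rightarrow>\<^sub>E UNIV" and eq: "?comb u = ?comb u'"
    have "(\<Sum>v\<in>X. scale (u v - u' v) v) = 0"
      using eq by (simp add: scale_left_diff_distrib sum_subtractf)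
    then have "\<forall>v\<in>X. u v - u' v = 0"
      using independentD[OF assms(3,2) subset_refl, of "\<lambda>v. u v - u' v"] by blast
    then show "u = u'" using u by (intro extensionalityI[of _ X]) (auto simp: PiE_def)
  qed
  then have "card (span X) = card (X \<rightarrow>\<^sub>E (UNIV :: 'a set))"
    by (simp add: span_eq card_image)
  also have "\<dots> = card (UNIV :: 'a set) ^ card X"
    using assms(2) by (simp add: card_PiE)
  finally show ?thesis .
qed

lemma card_subspace:
  assumes "finite (UNIV :: 'a set)" "subspace V" "finite V"
  shows "card V = card (UNIV :: 'a set) ^ dim V"
proof -
  obtain B where B: "B \<subseteq> V" "independent B" "V \<subseteq> span B" "card B = dim V"
    using basis_exists by blast
  have "span B = V" using B span_minimal[OF B(1) assms(2)] by blast
  then show ?thesis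
    using card_span_independent[OF assms(1) _ B(2)] B(1,4) assms(3) finite_subset by metis
qed

lemma dim_le_dim_of_subset:
  assumes "finite (UNIV :: 'a set)" "subspace V" "subspace V'" "finite V'" "V \<subseteq> V'"
  shows "dim V \<le> dim V'"
proof -
  have "finite V" using assms(4,5) finite_subset by blast
  have "card (UNIV :: 'a set) ^ dim V \<le> card (UNIV :: 'a set) ^ dim V'"
    using card_mono[OF assms(4,5)] card_subspace[OF assms(1,2) \<open>finite V\<close>]
      card_subspace[OF assms(1,3,4)] by simp
  then show ?thesis
    using card_UNIV_field_ge_2[OF assms(1)] by (simp add: power_le_imp_le_exp)
qed

lemma span_eq_of_independent_card_eq_dim:
  assumes "finite (UNIV :: 'a set)" "subspace V" "finite V"
    and "Y \<subseteq> V" "independent Y" "card Y = dim V"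
  shows "span Y = V"
proof -
  have "span Y \<subseteq> V" using assms(4,2) by (rule span_minimal)
  moreover have "card (span Y) = card V"
    using card_span_independent[OF assms(1) _ assms(5)] card_subspace[OF assms(1-3)]
      assms(3,4,6) finite_subset by metis
  ultimately show ?thesis using assms(3) card_subset_eq by blast
qed

definition independent_extensions :: "'b set \<Rightarrow> 'b set \<Rightarrow> 'i set \<Rightarrow> ('i \<Rightarrow> 'b) set" where
  "independent_extensions U W I =
     {c \<in> I \<rightarrow>\<^sub>E U. inj_on c I \<and> c ` I \<inter> W = {} \<and> independent (W \<union> c ` I)}"

(* The prefix local. below is needed because the interpretation real_vector of vector_space
   also provides a constant independent_extensions. *)

lemma independent_extensions_empty:
  "independent W \<Longrightarrow> local.independent_extensions U W {} = {\<lambda>_. undefined}"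
  by (auto simp: independent_extensions_def)

lemma independent_extensions_insert:
  assumes "i \<notin> I"
  shows "local.independent_extensions U W (insert i I) =
    (\<lambda>(c, x). c(i := x)) ` (SIGMA c : local.independent_extensions U W I. U - span (W \<union> c ` I))"
    (is "?T = ?f ` ?S")
proof
  show "?T \<subseteq> ?f ` ?S"
  proof
    fix c' assume "c' \<in> ?T"
    then have c': "c' \<in> insert i I \<rightarrow>\<^sub>E U" "inj_on c' (insert i I)" "c' ` insert i I \<inter> W = {}"
      "independent (W \<union> c' ` insert i I)"
      by (simp_all add: independent_extensions_def)
    define c where "c = restrict c' I"
    have "c \<in> local.independent_extensions U W I"
      unfolding independent_extensions_def c_def
      using c' independent_mono[OF c'(4), of "W \<union> c' ` I"] inj_on_subset[OF c'(2)]
      by auto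
    moreover have "c' i \<notin> span (W \<union> c ` I)"
    proof -
      have "c' i \<notin> W \<union> c ` I"
        using c'(2,3) assms by (auto simp: c_def)
      then show ?thesis
        using c'(4) independent_insert[of "c' i" "W \<union> c ` I"] by (simp add: c_def)
    qed
    moreover have "c' i \<in> U" using c'(1) by auto
    ultimately have "(c, c' i) \<in> ?S" by blast
    moreover have "c' = ?f (c, c' i)" using c'(1) assms by (simp add: c_def)
    ultimately show "c' \<in> ?f ` ?S" by blast
  qed
next
  show "?f ` ?S \<subseteq> ?T"
  proof
    fix y assume "y \<in> ?f ` ?S"
    then obtain c x where c: "c \<in> local.independent_extensions U W I"
      and x: "x \<in> U" "x \<notin> span (W \<union> c ` I)" and y: "y = c(i := x)"
      by auto
    have c_props: "c \<in> I \<rightarrow>\<^sub>E U" "inj_on c I" "c ` I \<inter> W = {}" "independent (W \<union> c ` I)"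
      using c by (simp_all add: independent_extensions_def)
    have same: "(c(i := x)) ` I = c ` I" using assms by (intro image_cong) auto
    have "x \<notin> W \<union> c ` I" using x(2) by (auto intro: span_base)
    moreover have "independent (insert x (W \<union> c ` I))"
      using x(2) c_props(4) by (rule independent_insertI)
    ultimately show "y \<in> ?T"
      using c_props x(1) assms same unfolding y independent_extensions_def
      by (simp add: PiE_fun_upd inj_on_fun_updI)
  qed
qed

lemma card_independent_extensions:
  assumes "finite (UNIV :: 'a set)" "subspace U" "finite U" "W \<subseteq> U" "independent W" "finite I"
  shows "card (local.independent_extensions U W I) =
    (\<Prod>j<card I. card (UNIV :: 'a set) ^ dim U - card (UNIV :: 'a set) ^ (card W + j))"
  using assms(6)
proof (induction I rule: finite_induct)
  case empty
  show ?case using assms(5) by (simp add: independent_extensions_empty)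
next
  case (insert i I)
  let ?q = "card (UNIV :: 'a set)" and ?S = "local.independent_extensions U W I"
  let ?R = "\<lambda>c. U - span (W \<union> c ` I)"
  have fibre: "card (?R c) = ?q ^ dim U - ?q ^ (card W + card I)" if c: "c \<in> ?S" for c
  proof -
    have c_props: "c ` I \<subseteq> U" "inj_on c I" "c ` I \<inter> W = {}" "independent (W \<union> c ` I)"
      using c by (auto simp: independent_extensions_def)
    have finite_W: "finite W" using assms(3,4) finite_subset by blast
    have "span (W \<union> c ` I) \<subseteq> U"
      using c_props(1) assms(2,4) by (intro span_minimal) auto
    moreover have "card (span (W \<union> c ` I)) = ?q ^ (card W + card I)"
      using card_span_independent[OF assms(1) _ c_props(4)] c_props(2,3) finite_W insert(1)
      by (simp add: card_Un_disjoint card_image Int_commute)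
    ultimately show ?thesis
      using card_subspace[OF assms(1-3)] assms(3) by (simp add: card_Diff_subset finite_subset)
  qed
  have "inj_on (\<lambda>(c, x). c(i := x)) (SIGMA c : ?S. ?R c)"
  proof (rule inj_onI, clarify)
    fix c x d y assume "c \<in> ?S" "d \<in> ?S" and eq: "c(i := x) = d(i := y)"
    then have "c i = undefined" "d i = undefined"
      using insert(2) by (auto simp: independent_extensions_def PiE_def extensional_def)
    then show "c = d \<and> x = y" using eq by (metis fun_upd_same fun_upd_triv fun_upd_upd)
  qed
  moreover have "finite ?S"
    using insert(1) assms(3)
    by (intro finite_subset[OF _ finite_PiE[of I "\<lambda>_. U"]]) (auto simp: independent_extensions_def)
  ultimately have "card (local.independent_extensions U W (insert i I)) = (\<Sum>c\<in>?S. card (?R c))"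
    using assms(3) by (simp add: independent_extensions_insert[OF insert(2)] card_image)
  also have "\<dots> = card ?S * (?q ^ dim U - ?q ^ (card W + card I))"
    using fibre by simp
  finally show ?case using insert by simp
qed

end

section \<open>Ordered bases and levels of the subspace lattice\<close>

type_synonym 'f vec = "nat \<Rightarrow> 'f"

interpretation fs: vector_space "fscale :: 'f::field \<Rightarrow> 'f vec \<Rightarrow> 'f vec"
  by unfold_locales (auto simp: fscale_def algebra_simps)

lemma bij_betw_restrict_Fn: "bij_betw (\<lambda>v. restrict v {..<n}) (Fn n) ({..<n} \<rightarrow>\<^sub>E UNIV)"
proof (rule bij_betwI')
  fix v w :: "nat \<Rightarrow> 'a" assume "v \<in> Fn n" "w \<in> Fn n"
  then show "(restrict v {..<n} = restrict w {..<n}) = (v = w)"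
    by (auto simp: Fn_def fun_eq_iff) (metis not_le)
next
  fix y :: "nat \<Rightarrow> 'a" assume y: "y \<in> {..<n} \<rightarrow>\<^sub>E UNIV"
  show "\<exists>v\<in>Fn n. y = restrict v {..<n}"
  proof
    show "(\<lambda>i. if i < n then y i else 0) \<in> Fn n" by (simp add: Fn_def)
    show "y = restrict (\<lambda>i. if i < n then y i else 0) {..<n}"
      using y by (auto simp: fun_eq_iff PiE_def extensional_def)
  qed
qed auto

lemma finite_Fn: "finite (Fn n :: 'f::{field,finite} vec set)"
  by (rule bij_betw_finite[OF bij_betw_restrict_Fn, THEN iffD2]) (simp add: finite_PiE)

lemma card_Fn: "card (Fn n :: 'f::{field,finite} vec set) = card (UNIV :: 'f set) ^ n"
  using bij_betw_same_card[OF bij_betw_restrict_Fn] by (simp add: card_PiE)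

lemma subspace_Fn: "fs.subspace (Fn n)"
  by (auto simp: fs.subspace_def Fn_def fscale_def)

lemma dim_Fn: "fs.dim (Fn n :: 'f::{field,finite} vec set) = n"
proof -
  have "card (UNIV :: 'f set) ^ fs.dim (Fn n :: 'f vec set) = card (UNIV :: 'f set) ^ n"
    using fs.card_subspace[OF finite_UNIV subspace_Fn[of n] finite_Fn[where 'f='f]] card_Fn[where 'f='f, of n] by simp
  then show ?thesis using card_UNIV_field_ge_2[where 'a='f] by simp
qed

lemma finite_subspaces: "finite (subspaces n :: 'f::{field,finite} vec set set)"
  by (rule finite_subset[of _ "Pow (Fn n)"]) (auto simp: subspaces_def finite_Fn)

lemma sdim_le:
  fixes V :: "'f::{field,finite} vec set"
  assumes "V \<in> subspaces n"
  shows "sdim V \<le> n"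
  using assms fs.dim_le_dim_of_subset[OF finite_UNIV _ subspace_Fn finite_Fn, of V n]
  by (simp add: subspaces_def sdim_def dim_Fn)

definition ordered_bases :: "nat \<Rightarrow> (nat \<Rightarrow> 'f::field vec) set" where
  "ordered_bases n = fs.independent_extensions (Fn n) {} {..<n}"

definition coord_subspace :: "(nat \<Rightarrow> 'f::field vec) \<Rightarrow> nat set \<Rightarrow> 'f vec set" where
  "coord_subspace b S = fs.span (b ` S)"

lemma ordered_bases_iff:
  "b \<in> ordered_bases n \<longleftrightarrow>
     b \<in> {..<n} \<rightarrow>\<^sub>E Fn n \<and> inj_on b {..<n} \<and> fs.independent (b ` {..<n})"
  by (simp add: ordered_bases_def fs.independent_extensions_def)

lemma card_ordered_bases:
  "card (ordered_bases n :: (nat \<Rightarrow> 'f::{field,finite} vec) set) =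
     (\<Prod>j<n. card (UNIV :: 'f set) ^ n - card (UNIV :: 'f set) ^ j)"
  using fs.card_independent_extensions[OF finite_UNIV subspace_Fn finite_Fn, where W="{}" and I="{..<n}"]
  by (simp add: ordered_bases_def dim_Fn fs.independent_empty)

lemma card_ordered_bases_pos: "0 < card (ordered_bases n :: (nat \<Rightarrow> 'f::{field,finite} vec) set)"
  unfolding card_ordered_bases using card_UNIV_field_ge_2[where 'a='f]
  by (intro prod_pos) (simp add: power_strict_increasing)

lemma mem_coord_subspace_iff:
  assumes "b \<in> ordered_bases n" "S \<subseteq> {..<n}" "t < n"
  shows "b t \<in> coord_subspace b S \<longleftrightarrow> t \<in> S"
proof
  assume "b t \<in> coord_subspace b S"
  moreover have "fs.independent (b ` insert t S)"
    using assms fs.independent_mono[of "b ` {..<n}" "b ` insert t S"] by (auto simp: ordered_bases_iff)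
  ultimately have "b t \<in> b ` S"
    using fs.independent_insert[of "b t" "b ` S"] by (auto simp: coord_subspace_def split: if_splits)
  then show "t \<in> S"
    using assms inj_onD[of b "{..<n}"] by (auto simp: ordered_bases_iff)
qed (auto simp: coord_subspace_def intro: fs.span_base)

lemma coord_subspace_in_subspaces:
  assumes "b \<in> ordered_bases n" "S \<subseteq> {..<n}"
  shows "coord_subspace b S \<in> subspaces n" "sdim (coord_subspace b S) = card S"
proof -
  have "b ` S \<subseteq> Fn n" using assms by (auto simp: ordered_bases_iff)
  then show "coord_subspace b S \<in> subspaces n"
    unfolding coord_subspace_def subspaces_def by (simp add: fs.span_minimal[OF _ subspace_Fn])
  have "fs.independent (b ` S)" "inj_on b S"
    using assms fs.independent_mono[of "b ` {..<n}" "b ` S"] inj_on_subset[of b "{..<n}" S]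
    by (auto simp: ordered_bases_iff)
  then show "sdim (coord_subspace b S) = card S"
    by (simp add: sdim_def coord_subspace_def fs.dim_eq_card_independent card_image)
qed

lemma coord_subspace_strict_mono:
  assumes "b \<in> ordered_bases n" "S \<subset> T" "T \<subseteq> {..<n}"
  shows "coord_subspace b S \<subset> coord_subspace b T"
proof -
  obtain t where "t \<in> T" "t \<notin> S" using assms(2) by blast
  then have "b t \<in> coord_subspace b T - coord_subspace b S"
    using assms mem_coord_subspace_iff[OF assms(1), of T t] mem_coord_subspace_iff[OF assms(1), of S t]
    by auto
  moreover have "coord_subspace b S \<subseteq> coord_subspace b T"
    using assms(2) fs.span_mono[of "b ` S" "b ` T"] by (auto simp: coord_subspace_def)
  ultimately show ?thesis by blast
qed

lemma inj_on_coord_subspace: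
  assumes "b \<in> ordered_bases n"
  shows "inj_on (coord_subspace b) (Pow {..<n})"
proof
  fix S T assume "S \<in> Pow {..<n}" "T \<in> Pow {..<n}" "coord_subspace b S = coord_subspace b T"
  then show "S = T" using mem_coord_subspace_iff[OF assms] by blast
qed

lemma restrict_ordered_basis_spanning:
  assumes "S \<subseteq> {..<n}" "b \<in> ordered_bases n" "coord_subspace b S = V"
  shows "restrict b S \<in> fs.independent_extensions V {} S"
    "restrict b ({..<n} - S) \<in> fs.independent_extensions (Fn n) (b ` S) ({..<n} - S)"
proof -
  define R where "R = {..<n} - S"
  have SR: "S \<union> R = {..<n}" "S \<inter> R = {}" using assms(1) by (auto simp: R_def)
  have b: "b \<in> {..<n} \<rightarrow>\<^sub>E Fn n" "inj_on b (S \<union> R)" "fs.independent (b ` S \<union> b ` R)"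
    using assms(2) by (simp_all add: ordered_bases_iff SR(1) flip: image_Un)
  have inj: "inj_on b S" "inj_on b R" using b(2) by (simp_all add: inj_on_Un)
  have "b ` S \<subseteq> V" using assms(3) fs.span_superset[of "b ` S"] by (simp add: coord_subspace_def)
  then show "restrict b S \<in> fs.independent_extensions V {} S"
    using inj(1) fs.independent_mono[OF b(3), of "b ` S"] by (auto simp: fs.independent_extensions_def)
  have "b ` S \<inter> b ` R = {}" using b(2) SR(2) by (auto simp: inj_on_def)
  moreover have "R \<subseteq> {..<n}" by (simp add: R_def)
  ultimately have "restrict b R \<in> fs.independent_extensions (Fn n) (b ` S) R"
    using b(1,3) inj(2) by (auto simp: fs.independent_extensions_def)
  then show "restrict b ({..<n} - S) \<in> fs.independent_extensions (Fn n) (b ` S) ({..<n} - S)"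
    by (simp add: R_def)
qed

lemma ordered_basis_spanning_merge:
  fixes V :: "'f::{field,finite} vec set"
  assumes S: "S \<subseteq> {..<n}" and V: "V \<in> subspaces n" "sdim V = card S"
    and a: "a \<in> fs.independent_extensions V {} S"
    and c: "c \<in> fs.independent_extensions (Fn n) (a ` S) ({..<n} - S)"
  defines "b \<equiv> \<lambda>i. if i \<in> S then a i else c i"
  shows "b \<in> ordered_bases n" "coord_subspace b S = V"
proof -
  define R where "R = {..<n} - S"
  have SR: "S \<union> R = {..<n}" "S \<inter> R = {}" using S by (auto simp: R_def)
  have V_sub: "V \<subseteq> Fn n" and V_subspace: "fs.subspace V" using V by (auto simp: subspaces_def)
  have a_props: "a \<in> S \<rightarrow>\<^sub>E V" "inj_on a S" "fs.independent (a ` S)"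
    using a by (simp_all add: fs.independent_extensions_def)
  have c_props: "c \<in> R \<rightarrow>\<^sub>E Fn n" "inj_on c R" "c ` R \<inter> a ` S = {}"
    "fs.independent (a ` S \<union> c ` R)"
    using c by (simp_all add: fs.independent_extensions_def R_def)
  have bS: "b ` S = a ` S" and bR: "b ` R = c ` R" using SR(2) by (auto simp: b_def)
  have "b \<in> {..<n} \<rightarrow>\<^sub>E Fn n"
    using a_props(1) c_props(1) V_sub SR by (auto simp: b_def PiE_iff extensional_def)
  moreover have "inj_on b {..<n}"
  proof -
    have "inj_on b S" using a_props(2) by (simp add: b_def inj_on_def)
    moreover have "inj_on b R" using c_props(2) SR(2) by (auto simp: b_def inj_on_def)
    moreover have "S - R = S" "R - S = R" using SR(2) by blast+
    ultimately show ?thesis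
      unfolding SR(1)[symmetric] inj_on_Un using bS bR c_props(3) by auto
  qed
  moreover have "fs.independent (b ` {..<n})"
    using c_props(4) by (simp add: SR(1)[symmetric] image_Un bS bR)
  ultimately show "b \<in> ordered_bases n" by (simp add: ordered_bases_iff)
  show "coord_subspace b S = V"
    unfolding coord_subspace_def bS using a_props V V_subspace V_sub finite_subset[OF V_sub finite_Fn]
    by (intro fs.span_eq_of_independent_card_eq_dim[OF finite_UNIV]) (auto simp: card_image sdim_def)
qed

lemma bij_betw_ordered_bases_spanning:
  fixes V :: "'f::{field,finite} vec set"
  assumes S: "S \<subseteq> {..<n}" and V: "V \<in> subspaces n" "sdim V = card S"
  defines "R \<equiv> {..<n} - S"
  shows "bij_betw (\<lambda>b. (restrict b S, restrict b R))
    {b \<in> ordered_bases n. coord_subspace b S = V}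
    (SIGMA a : fs.independent_extensions V {} S. fs.independent_extensions (Fn n) (a ` S) R)"
proof (rule bij_betwI[where g = "\<lambda>(a, c) i. if i \<in> S then a i else c i"])
  show "(\<lambda>b. (restrict b S, restrict b R)) \<in> {b \<in> ordered_bases n. coord_subspace b S = V} \<rightarrow>
    (SIGMA a : fs.independent_extensions V {} S. fs.independent_extensions (Fn n) (a ` S) R)"
  proof
    fix b assume "b \<in> {b \<in> ordered_bases n. coord_subspace b S = V}"
    then show "(restrict b S, restrict b R) \<in>
      (SIGMA a : fs.independent_extensions V {} S. fs.independent_extensions (Fn n) (a ` S) R)"
      using restrict_ordered_basis_spanning[OF S, of b V] by (simp add: R_def)
  qed
  show "(\<lambda>(a, c) i. if i \<in> S then a i else c i) \<in>
    (SIGMA a : fs.independent_extensions V {} S. fs.independent_extensions (Fn n) (a ` S) R) \<rightarrow>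
    {b \<in> ordered_bases n. coord_subspace b S = V}"
    using ordered_basis_spanning_merge[OF S V] by (auto simp: R_def)
  show "(\<lambda>(a, c) i. if i \<in> S then a i else c i) (restrict b S, restrict b R) = b"
    if "b \<in> {b \<in> ordered_bases n. coord_subspace b S = V}" for b
  proof -
    have "S \<union> R = {..<n}" using S by (auto simp: R_def)
    then have "b \<in> extensional (S \<union> R)" using that by (simp add: ordered_bases_iff PiE_def)
    then show ?thesis by (auto simp: fun_eq_iff extensional_def)
  qed
  show "(\<lambda>b. (restrict b S, restrict b R)) ((\<lambda>(a, c) i. if i \<in> S then a i else c i) p) = p"
    if p: "p \<in> (SIGMA a : fs.independent_extensions V {} S. fs.independent_extensions (Fn n) (a ` S) R)"
    for p
  proof -
    obtain a c where "p = (a, c)" "a \<in> fs.independent_extensions V {} S"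
      "c \<in> fs.independent_extensions (Fn n) (a ` S) R"
      using p by blast
    then show ?thesis
      by (auto simp: fs.independent_extensions_def PiE_def fun_eq_iff extensional_def R_def)
  qed
qed

lemma card_ordered_bases_spanning:
  fixes V :: "'f::{field,finite} vec set"
  assumes S: "S \<subseteq> {..<n}" and V: "V \<in> subspaces n" "sdim V = card S"
  shows "card {b \<in> ordered_bases n. coord_subspace b S = V} =
    (\<Prod>j<card S. card (UNIV :: 'f set) ^ card S - card (UNIV :: 'f set) ^ j) *
    (\<Prod>j<n - card S. card (UNIV :: 'f set) ^ n - card (UNIV :: 'f set) ^ (card S + j))"
proof -
  let ?q = "card (UNIV :: 'f set)" and ?R = "{..<n} - S"
  let ?A = "fs.independent_extensions V {} S"
  let ?C = "\<lambda>a. fs.independent_extensions (Fn n) (a ` S) ?R"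
  have V_sub: "V \<subseteq> Fn n" and V_subspace: "fs.subspace V" using V by (auto simp: subspaces_def)
  have finite_V: "finite V" using V_sub finite_Fn finite_subset by blast
  have finite_S: "finite S" using S finite_subset by blast
  have card_C: "card (?C a) = (\<Prod>j<n - card S. ?q ^ n - ?q ^ (card S + j))" if "a \<in> ?A" for a
  proof -
    have "a ` S \<subseteq> Fn n" "inj_on a S" "fs.independent (a ` S)"
      using that V_sub by (auto simp: fs.independent_extensions_def)
    then show ?thesis
      using fs.card_independent_extensions[OF finite_UNIV subspace_Fn finite_Fn, where W="a ` S" and I="?R"]
        S finite_S
      by (simp add: dim_Fn card_image card_Diff_subset)
  qed
  have "card {b \<in> ordered_bases n. coord_subspace b S = V} = card (SIGMA a : ?A. ?C a)"
    using bij_betw_same_card[OF bij_betw_ordered_bases_spanning[OF S V]] .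
  also have "\<dots> = (\<Sum>a\<in>?A. card (?C a))"
  proof (rule card_SigmaI)
    show "finite ?A"
      using finite_S finite_V by (intro finite_subset[OF _ finite_PiE[of S "\<lambda>_. V"]])
        (auto simp: fs.independent_extensions_def)
    show "\<forall>a\<in>?A. finite (?C a)"
      using finite_Fn by (intro ballI finite_subset[OF _ finite_PiE[of ?R "\<lambda>_. Fn n"]])
        (auto simp: fs.independent_extensions_def)
  qed
  also have "\<dots> = card ?A * (\<Prod>j<n - card S. ?q ^ n - ?q ^ (card S + j))"
    using card_C by simp
  also have "card ?A = (\<Prod>j<card S. ?q ^ card S - ?q ^ j)"
    using fs.card_independent_extensions[OF finite_UNIV V_subspace finite_V, where W="{}" and I=S] V finite_S
    by (simp add: fs.independent_empty sdim_def)
  finally show ?thesis .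
qed

lemma card_ordered_bases_spanning_mult:
  fixes V :: "'f::{field,finite} vec set"
  assumes S: "S \<subseteq> {..<n}" and V: "V \<in> subspaces n" "sdim V = card S"
  shows "real (card {b \<in> ordered_bases n. coord_subspace b S = V})
           * gauss_binom (real (card (UNIV :: 'f set))) n (card S)
         = real (card (ordered_bases n :: (nat \<Rightarrow> 'f vec) set))"
proof -
  let ?q = "card (UNIV :: 'f set)" and ?k = "card S"
  have q: "1 < real ?q" using card_UNIV_field_ge_2[where 'a='f] by simp
  have k: "?k \<le> n" using S by (simp add: card_mono[of "{..<n}" S, simplified])
  define E where "E = (\<Prod>j<n - ?k. real ?q ^ n - real ?q ^ (?k + j))"
  have "real (card {b \<in> ordered_bases n. coord_subspace b S = V})
      = (\<Prod>j<?k. real ?q ^ ?k - real ?q ^ j) * E"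
    unfolding card_ordered_bases_spanning[OF S V] E_def of_nat_mult using k q
    by (subst (1 2) of_nat_prod_power_diff) auto
  moreover have "real (card (ordered_bases n :: (nat \<Rightarrow> 'f vec) set))
      = (\<Prod>j<?k. real ?q ^ n - real ?q ^ j) * E"
  proof -
    have "real (card (ordered_bases n :: (nat \<Rightarrow> 'f vec) set)) = (\<Prod>j<n. real ?q ^ n - real ?q ^ j)"
      unfolding card_ordered_bases using q by (subst of_nat_prod_power_diff) auto
    also have "\<dots> = (\<Prod>j<?k + (n - ?k). real ?q ^ n - real ?q ^ j)" using k by simp
    finally show ?thesis unfolding prod_lessThan_add E_def .
  qed
  ultimately show ?thesis
    using gauss_binom_mult_prod[OF q k] by (simp add: algebra_simps)
qed

definition grassmannian :: "nat \<Rightarrow> nat \<Rightarrow> 'f::field vec set set" where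
  "grassmannian n k = {V \<in> subspaces n. sdim V = k}"

lemma finite_grassmannian: "finite (grassmannian n k :: 'f::{field,finite} vec set set)"
  by (rule finite_subset[OF _ finite_subspaces[of n]]) (auto simp: grassmannian_def)

lemma card_grassmannian:
  assumes "k \<le> n"
  shows "real (card (grassmannian n k :: 'f::{field,finite} vec set set))
    = gauss_binom (real (card (UNIV :: 'f set))) n k"
proof -
  let ?B = "ordered_bases n :: (nat \<Rightarrow> 'f vec) set"
  let ?g = "gauss_binom (real (card (UNIV :: 'f set))) n k"
  let ?X = "\<lambda>V. {b \<in> ?B. coord_subspace b {..<k} = V}"
  have S: "{..<k} \<subseteq> {..<n}" using assms by auto
  have B_eq: "?B = (\<Union>V \<in> grassmannian n k. ?X V)"
    using coord_subspace_in_subspaces[OF _ S] by (auto simp: grassmannian_def)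
  have "finite ?B"
    using card_ordered_bases_pos[of n, where 'f='f] card.infinite by fastforce
  then have "card ?B = (\<Sum>V \<in> grassmannian n k. card (?X V))"
    by (subst B_eq) (auto intro!: card_UN_disjoint simp: finite_grassmannian)
  then have "real (card ?B) * ?g = (\<Sum>V \<in> grassmannian n k. real (card (?X V)) * ?g)"
    by (simp add: sum_distrib_right)
  also have "\<dots> = (\<Sum>V \<in> (grassmannian n k :: 'f vec set set). real (card ?B))"
  proof (rule sum.cong[OF refl])
    fix V assume "V \<in> (grassmannian n k :: 'f vec set set)"
    then show "real (card (?X V)) * ?g = real (card ?B)"
      using card_ordered_bases_spanning_mult[OF S, of V] by (simp add: grassmannian_def)
  qed
  also have "\<dots> = real (card (grassmannian n k :: 'f vec set set)) * real (card ?B)"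
    by simp
  finally show ?thesis
    using card_ordered_bases_pos[of n, where 'f='f] by simp
qed

lemma mid_levels_eq_UN:
  assumes "e \<le> n"
  shows "mid_levels n e = (\<Union>i\<in>{1..e}. grassmannian n ((n - e) div 2 + i))"
proof -
  have "((n - e) div 2 < d \<and> d \<le> (n - e) div 2 + e) \<longleftrightarrow> (\<exists>i\<in>{1..e}. d = (n - e) div 2 + i)"
    for d
    by (auto intro!: bexI[of _ "d - (n - e) div 2"])
  then show ?thesis
    unfolding mid_levels_def grassmannian_def int_diff_div_2[OF assms] by (auto simp flip: of_nat_add)
qed

lemma sum_mid_levels:
  assumes "e \<le> n"
  shows "(\<Sum>V \<in> (mid_levels n e :: 'f::{field,finite} vec set set). g (sdim V)) =
    (\<Sum>i=1..e. gauss_binom (real (card (UNIV :: 'f set))) n ((n - e) div 2 + i) * g ((n - e) div 2 + i))"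
proof -
  let ?j = "\<lambda>i. (n - e) div 2 + i"
  have "(\<Sum>V \<in> (mid_levels n e :: 'f vec set set). g (sdim V))
      = (\<Sum>i=1..e. \<Sum>V \<in> (grassmannian n (?j i) :: 'f vec set set). g (sdim V))"
    unfolding mid_levels_eq_UN[OF assms]
    by (rule sum.UNION_disjoint) (simp_all add: finite_grassmannian, auto simp: grassmannian_def)
  also have "\<dots> = (\<Sum>i=1..e. real (card (grassmannian n (?j i) :: 'f vec set set)) * g (?j i))"
    by (intro sum.cong) (auto simp: grassmannian_def)
  also have "\<dots> = (\<Sum>i=1..e. gauss_binom (real (card (UNIV :: 'f set))) n (?j i) * g (?j i))"
    using assms by (intro sum.cong) (auto simp: card_grassmannian)
  finally show ?thesis .
qed

lemma card_mid_levels: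
  "e \<le> n \<Longrightarrow> real (card (mid_levels n e :: 'f::{field,finite} vec set set))
     = Sigma_q (real (card (UNIV :: 'f set))) n e"
  using sum_mid_levels[of e n "\<lambda>_. 1", where 'f='f] by (simp add: Sigma_q_eq_sum)

lemma sum_lym_weight_mid_levels:
  assumes "e \<le> n"
  shows "(\<Sum>V \<in> (mid_levels n e :: 'f::{field,finite} vec set set).
      lym_weight (real (card (UNIV :: 'f set))) n (sdim V)) = Sigma_b n e"
proof -
  let ?q = "real (card (UNIV :: 'f set))"
  have q: "1 < ?q" using card_UNIV_field_ge_2[where 'a='f] by simp
  have "(\<Sum>V \<in> (mid_levels n e :: 'f vec set set). lym_weight ?q n (sdim V))
      = (\<Sum>i=1..e. gauss_binom ?q n ((n - e) div 2 + i) * lym_weight ?q n ((n - e) div 2 + i))"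
    by (rule sum_mid_levels[OF assms])
  also have "\<dots> = (\<Sum>i=1..e. real (n choose ((n - e) div 2 + i)))"
    using assms by (intro sum.cong refl gauss_binom_mult_lym_weight[OF q]) auto
  finally show ?thesis using Sigma_b_eq_sum[OF assms] by simp
qed

section \<open>The q-analogue of the LYM inequality\<close>

lemma sum_card_ordered_bases_spanning:
  fixes V :: "'f::{field,finite} vec set"
  assumes V: "V \<in> subspaces n"
  shows "(\<Sum>S \<in> Pow {..<n}. real (card {b \<in> ordered_bases n. coord_subspace b S = V}))
    = real (card (ordered_bases n :: (nat \<Rightarrow> 'f vec) set))
      * lym_weight (real (card (UNIV :: 'f set))) n (sdim V)"
proof -
  let ?N = "real (card (ordered_bases n :: (nat \<Rightarrow> 'f vec) set))"
  let ?g = "gauss_binom (real (card (UNIV :: 'f set))) n (sdim V)"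
  have q: "1 < real (card (UNIV :: 'f set))" using card_UNIV_field_ge_2[where 'a='f] by simp
  have g_pos: "0 < ?g" using gauss_binom_pos[OF q sdim_le[OF V]] .
  have fibre: "real (card {b \<in> ordered_bases n. coord_subspace b S = V})
      = (if card S = sdim V then ?N / ?g else 0)" if S: "S \<in> Pow {..<n}" for S
  proof (cases "card S = sdim V")
    case True
    then show ?thesis
      using card_ordered_bases_spanning_mult[of S n V] S V g_pos by (simp add: field_simps)
  next
    case False
    have "coord_subspace b S \<noteq> V" if "b \<in> ordered_bases n" for b
      using coord_subspace_in_subspaces(2)[OF that] S False by auto
    then have "{b \<in> ordered_bases n. coord_subspace b S = V} = {}" by blast
    then have "card {b \<in> ordered_bases n. coord_subspace b S = V} = 0" by (simp only: card.empty)
    then show ?thesis using False by simp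
  qed
  have "(\<Sum>S \<in> Pow {..<n}. real (card {b \<in> ordered_bases n. coord_subspace b S = V}))
      = real (card {S \<in> Pow {..<n}. card S = sdim V}) * (?N / ?g)"
    by (simp add: fibre sum.If_cases Int_def)
  also have "card {S \<in> Pow {..<n}. card S = sdim V} = n choose sdim V"
    using n_subsets[of "{..<n}" "sdim V"] by (simp add: Pow_def)
  finally show ?thesis by (simp add: lym_weight_def)
qed

lemma sum_lym_weight_le_La:
  fixes F :: "'f::{field,finite} vec set set"
  assumes F: "F \<subseteq> subspaces n" "P_free P F"
  shows "(\<Sum>V\<in>F. lym_weight (real (card (UNIV :: 'f set))) n (sdim V)) \<le> real (La P n)"
proof -
  \<comment> \<open>Double counting of the pairs (b, S) with coord_subspace b S \<in> F: for a fixed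
    ordered basis b these sets S form a P-free family of subsets of {..<n}.\<close>
  let ?B = "ordered_bases n :: (nat \<Rightarrow> 'f vec) set"
  let ?N = "real (card ?B)"
  have N_pos: "0 < ?N" using card_ordered_bases_pos[of n, where 'f='f] by simp
  then have finite_B: "finite ?B" using card.infinite by fastforce
  have finite_F: "finite F" using F(1) finite_subspaces finite_subset by blast
  have "?N * (\<Sum>V\<in>F. lym_weight (real (card (UNIV :: 'f set))) n (sdim V))
      = (\<Sum>V\<in>F. \<Sum>S \<in> Pow {..<n}. real (card {b \<in> ?B. coord_subspace b S = V}))"
    using F(1) by (auto simp: sum_distrib_left sum_card_ordered_bases_spanning intro!: sum.cong)
  also have "\<dots> = (\<Sum>S \<in> Pow {..<n}. \<Sum>V\<in>F. \<Sum>b\<in>?B. of_bool (coord_subspace b S = V))"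
    using finite_B by (subst sum.swap) (simp only: sum_of_bool_eq_card_filter)
  also have "\<dots> = (\<Sum>S \<in> Pow {..<n}. \<Sum>b\<in>?B. of_bool (coord_subspace b S \<in> F))"
    using finite_F by (intro sum.cong refl, subst sum.swap) (simp add: of_bool_def)
  also have "\<dots> = (\<Sum>b\<in>?B. real (card {S \<in> Pow {..<n}. coord_subspace b S \<in> F}))"
    by (subst sum.swap) (simp only: sum_of_bool_eq_card_filter finite_Pow_iff finite_lessThan)
  also have "\<dots> \<le> (\<Sum>b\<in>?B. real (La P n))"
  proof (rule sum_mono)
    fix b assume b: "b \<in> ?B"
    have "P_free P {S \<in> Pow {..<n}. coord_subspace b S \<in> F}"
      using F(2) inj_on_coord_subspace[OF b] coord_subspace_strict_mono[OF b]
      by (rule P_free_preimage) auto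
    then show "real (card {S \<in> Pow {..<n}. coord_subspace b S \<in> F}) \<le> real (La P n)"
      by (subst of_nat_le_iff) (rule card_le_La, auto)
  qed
  also have "\<dots> = ?N * real (La P n)" by simp
  finally show ?thesis using N_pos by simp
qed

lemma card_le_La_q:
  assumes "F \<subseteq> (subspaces n :: 'f::{field,finite} vec set set)" "P_free P F"
  shows "card F \<le> La_q P n TYPE('f)"
proof -
  have "finite {card F | F. F \<subseteq> (subspaces n :: 'f vec set set) \<and> P_free P F}"
    by (rule finite_subset[of _ "card ` Pow (subspaces n)"]) (auto simp: finite_subspaces)
  then show ?thesis unfolding La_q_def using assms by (intro Max_ge) auto
qed

lemma La_q_attained:
  assumes "P \<noteq> {}"
  obtains F where "F \<subseteq> (subspaces n :: 'f::{field,finite} vec set set)" "P_free P F"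
    "La_q P n TYPE('f) = card F"
proof -
  let ?A = "{card F | F. F \<subseteq> (subspaces n :: 'f vec set set) \<and> P_free P F}"
  have "finite ?A"
    by (rule finite_subset[of _ "card ` Pow (subspaces n)"]) (auto simp: finite_subspaces)
  moreover have "?A \<noteq> {}" using P_free_empty[OF assms] by blast
  ultimately have "Max ?A \<in> ?A" by (rule Max_in)
  then show ?thesis using that by (auto simp: La_q_def)
qed

lemma La_q_le_Sigma_q_plus_excess:
  fixes P :: "'p::order set"
  assumes "P \<noteq> {}" "e \<le> n"
  defines "q \<equiv> real (card (UNIV :: 'f::{field,finite} set))"
  shows "real (La_q P n TYPE('f)) \<le>
    Sigma_q q n e + (real (La P n) - Sigma_b n e) / lym_weight q n ((n - e) div 2)"
proof -
  obtain F where F: "F \<subseteq> (subspaces n :: 'f vec set set)" "P_free P F" "La_q P n TYPE('f) = card F"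
    using La_q_attained[OF assms(1)] by blast
  let ?M = "mid_levels n e :: 'f vec set set" and ?w = "\<lambda>V. lym_weight q n (sdim V)"
  have q: "1 < q" using card_UNIV_field_ge_2[where 'a='f] by (simp add: q_def)
  have W_pos: "0 < lym_weight q n ((n - e) div 2)" using lym_weight_pos[OF q] assms(2) by simp
  have "real (La_q P n TYPE('f)) \<le> real (card ?M) + (sum ?w F - sum ?w ?M) / lym_weight q n ((n - e) div 2)"
    unfolding F(3)
  proof (rule card_le_card_plus_weight_excess)
    show "finite F" "finite ?M"
      using F(1) finite_subspaces finite_subset by (blast, auto simp: mid_levels_def finite_subspaces)
    show "0 < lym_weight q n ((n - e) div 2)" by (rule W_pos)
    show "lym_weight q n ((n - e) div 2) \<le> ?w V" if "V \<in> F - ?M" for V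
      using that F(1) sdim_le lym_weight_ge_out_window[OF q assms(2)]
      by (auto simp: mid_levels_def int_diff_div_2[OF assms(2)] simp flip: of_nat_add)
    show "?w V \<le> lym_weight q n ((n - e) div 2)" if "V \<in> ?M - F" for V
      using that lym_weight_le_in_window[OF q assms(2)]
      by (auto simp: mid_levels_def int_diff_div_2[OF assms(2)] simp flip: of_nat_add)
  qed
  also have "sum ?w ?M = Sigma_b n e" using sum_lym_weight_mid_levels[OF assms(2)] by (simp add: q_def)
  also have "real (card ?M) = Sigma_q q n e" using card_mid_levels[OF assms(2)] by (simp add: q_def)
  also have "Sigma_q q n e + (sum ?w F - Sigma_b n e) / lym_weight q n ((n - e) div 2)
      \<le> Sigma_q q n e + (real (La P n) - Sigma_b n e) / lym_weight q n ((n - e) div 2)"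
    using sum_lym_weight_le_La[OF F(1,2)] W_pos by (simp add: q_def divide_right_mono)
  finally show ?thesis .
qed

section \<open>The middle levels\<close>

lemma weakly_contains_nonzero_subspaces:
  fixes P :: "'p::order set"
  assumes "finite P" "card P \<le> m"
  shows "weakly_contains P (mid_levels m m :: 'f::{field,finite} vec set set)"
proof -
  obtain b where b: "b \<in> (ordered_bases m :: (nat \<Rightarrow> 'f vec) set)"
    using card_ordered_bases_pos[of m, where 'f='f] by (metis card.empty ex_in_conv less_irrefl)
  let ?G = "{S. S \<subseteq> {..<m} \<and> S \<noteq> {}}"
  have mono: "coord_subspace b S \<subset> coord_subspace b T"
    if "S \<in> Pow {..<m}" "T \<in> Pow {..<m}" "S \<subset> T" for S T
    using coord_subspace_strict_mono[OF b that(3)] that(2) by simp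
  have "weakly_contains P (coord_subspace b ` ?G)"
    by (rule weakly_contains_image[OF weakly_contains_nonempty_subsets[OF assms] _
          inj_on_coord_subspace[OF b] mono]) auto
  moreover have "coord_subspace b ` ?G \<subseteq> mid_levels m m"
  proof clarify
    fix S assume S: "S \<subseteq> {..<m}" "S \<noteq> {}"
    then have "0 < card S" "card S \<le> m"
      using finite_subset[OF S(1)] card_mono[OF _ S(1)] by (auto simp: card_gt_0_iff)
    then show "coord_subspace b S \<in> mid_levels m m"
      using coord_subspace_in_subspaces[OF b S(1)] by (simp add: mid_levels_def)
  qed
  ultimately show ?thesis by (rule weakly_contains_mono)
qed

lemma P_free_mid_levels_eqP:
  fixes P :: "'p::order set"
  assumes "finite P" "P \<noteq> {}"
  shows "P_free P (mid_levels n (eqP P TYPE('f)) :: 'f::{field,finite} vec set set)"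
proof -
  let ?Q = "\<lambda>m. \<forall>n. P_free P (mid_levels n m :: 'f vec set set)"
  have "(mid_levels n 0 :: 'f vec set set) = {}" for n by (auto simp: mid_levels_def)
  then have "?Q 0" using P_free_empty[OF assms(2)] by simp
  moreover have "m \<le> card P" if "?Q m" for m
    using that weakly_contains_nonzero_subspaces[OF assms(1), of m, where 'f='f]
    by (meson P_free_def nat_le_linear)
  ultimately have "?Q (Greatest ?Q)" by (rule GreatestI_nat)
  then show ?thesis by (simp add: eqP_def)
qed

lemma Sigma_q_le_La_q:
  fixes P :: "'p::order set"
  assumes "finite P" "P \<noteq> {}" "eqP P TYPE('f::{field,finite}) \<le> n"
  shows "Sigma_q (real (card (UNIV :: 'f set))) n (eqP P TYPE('f)) \<le> real (La_q P n TYPE('f))"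
proof -
  have "card (mid_levels n (eqP P TYPE('f)) :: 'f vec set set) \<le> La_q P n TYPE('f)"
    using P_free_mid_levels_eqP[OF assms(1,2)] by (intro card_le_La_q) (auto simp: mid_levels_def)
  then show ?thesis using card_mid_levels[OF assms(3), where 'f='f] by simp
qed

lemma La_q_relative_error_le:
  fixes P :: "'p::order set"
  defines "q \<equiv> real (card (UNIV :: 'f::{field,finite} set))" and "e \<equiv> eqP P TYPE('f)"
  assumes "finite P" "P \<noteq> {}" "e \<le> n" "0 < c"
    and La: "\<bar>real (La P n) - Sigma_b n e\<bar> \<le> c * \<bar>Sigma_b n e\<bar>"
  shows "\<bar>real (La_q P n TYPE('f)) - Sigma_q q n e\<bar> \<le> c * \<bar>Sigma_q q n e\<bar>"
proof -
  define W where "W = lym_weight q n ((n - e) div 2)"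
  have q: "1 < q" using card_UNIV_field_ge_2[where 'a='f] by (simp add: q_def)
  have W_pos: "0 < W" using lym_weight_pos[OF q] assms(5) by (simp add: W_def)
  have Sb_le: "Sigma_b n e \<le> W * Sigma_q q n e"
    using Sigma_b_le_lym_weight_Sigma_q[OF q assms(5)] by (simp add: W_def)
  have Sb_nonneg: "0 \<le> Sigma_b n e" using assms(5) by (simp add: Sigma_b_eq_sum sum_nonneg)
  have Sq_nonneg: "0 \<le> Sigma_q q n e"
    using card_mid_levels[OF assms(5), where 'f='f] by (simp add: q_def flip: of_nat_0_le_iff)
  have lower: "Sigma_q q n e \<le> real (La_q P n TYPE('f))"
    using Sigma_q_le_La_q[OF assms(3,4)] assms(5) by (simp add: q_def e_def)
  have "real (La_q P n TYPE('f)) - Sigma_q q n e \<le> (real (La P n) - Sigma_b n e) / W"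
    using La_q_le_Sigma_q_plus_excess[OF assms(4,5), where 'f='f] by (simp add: q_def W_def)
  also have "\<dots> \<le> c * Sigma_b n e / W"
    using La Sb_nonneg W_pos by (simp add: divide_right_mono)
  also have "\<dots> \<le> c * Sigma_q q n e"
    using mult_left_mono[OF Sb_le, of c] assms(6) W_pos by (simp add: field_simps)
  finally show ?thesis using lower Sq_nonneg by simp
qed

theorem corollary1p5:
  fixes P :: "'p::order set"
  assumes "finite P" and "P \<noteq> {}"
    and "(\<lambda>n. real (La P n)) \<sim>[at_top] (\<lambda>n. Sigma_b n (eP P))"
    and "eqP P TYPE('f::{field,finite}) = eP P"
  shows "(\<lambda>n. real (La_q P n TYPE('f))) \<sim>[at_top]
           (\<lambda>n. Sigma_q (real (card (UNIV :: 'f set))) n (eqP P TYPE('f)))"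
proof -
  let ?e = "eqP P TYPE('f)"
  have La: "(\<lambda>n. real (La P n) - Sigma_b n ?e) \<in> o(\<lambda>n. Sigma_b n ?e)"
    using asymp_equiv_imp_diff_smallo[OF assms(3)] assms(4) by simp
  show ?thesis
    unfolding asymp_equiv_altdef
  proof (rule landau_o.smallI)
    fix c :: real assume "0 < c"
    from landau_o.smallD[OF La this] eventually_ge_at_top[of ?e]
    show "\<forall>\<^sub>F n in at_top. norm (real (La_q P n TYPE('f)) - Sigma_q (real (card (UNIV :: 'f set))) n ?e)
      \<le> c * norm (Sigma_q (real (card (UNIV :: 'f set))) n ?e)"
      by eventually_elim (use La_q_relative_error_le[OF assms(1,2) _ \<open>0 < c\<close>] in auto)
  qed
qed

end
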